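(* Let $(a_n)_{n\geq 0}$ be a primary pseudo-polynomial and $f=\sum_{n\ge0}a_nx^n$ its generating series. Then for every positive integer $n$, the integer $\det H_n(f)$ is divisible by $$\prod_{\substack{p\le n-1\\ p \text{ prime}}} p^{\,n-p}.$$
   Context: A sequence of integers $(a_n)_{n\ge0}$ is a primary pseudo-polynomial if $a_{n+p}\equiv a_n \pmod p$ for every integer $n\ge 0$ and every prime $p$. For $n\ge1$, the $n$-th Hankel matrix of $f$ is $H_n(f)=(a_{i+j-2})_{1\le i,j\le n}$. *)

theory Defs
  imports "HOL-Computational_Algebra.Primes" "Jordan_Normal_Form.Determinant"
begin

definition primary_pseudo_polynomial :: "(nat \<Rightarrow> int) \<Rightarrow> bool" where
  "primary_pseudo_polynomial a \<longleftrightarrow>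
     (\<forall>n p. prime p \<longrightarrow> a (n + p) mod int p = a n mod int p)"

text \<open>The n-th Hankel matrix H_n(f) = (a_{i+j-2})_{1<=i,j<=n}; with 0-based indices i,j<n
  the entry is a (i + j).\<close>
definition hankel :: "(nat \<Rightarrow> int) \<Rightarrow> nat \<Rightarrow> int mat" where
  "hankel a n = mat n n (\<lambda>(i, j). a (i + j))"

end

theory Submission
  imports Defs
begin

text \<open>Fix a prime \<open>p < n\<close>. Since \<open>a (k + p) \<equiv> a k (mod p)\<close>, subtracting row \<open>k - p\<close> of the
  Hankel matrix from row \<open>k\<close>, for every \<open>k \<ge> p\<close> (a unimodular row operation), leaves \<open>n - p\<close>
  rows divisible by \<open>p\<close>, so \<open>p ^ (n - p)\<close> divides the determinant. These prime powers are
  pairwise coprime, hence their product divides it as well.\<close>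

lemma prod_dvd_if_pairwise_coprime:
  fixes f :: "'b \<Rightarrow> 'a::semiring_gcd"
  assumes "finite A"
    and "\<And>x y. x \<in> A \<Longrightarrow> y \<in> A \<Longrightarrow> x \<noteq> y \<Longrightarrow> coprime (f x) (f y)"
    and "\<And>x. x \<in> A \<Longrightarrow> f x dvd m"
  shows "prod f A dvd m"
  using assms
proof (induction A rule: finite_induct)
  case empty
  then show ?case by simp
next
  case (insert x A)
  have "coprime (f x) (prod f A)"
    by (rule prod_coprime_right) (use insert in blast)
  moreover have "prod f A dvd m"
    using insert by blast
  ultimately show ?case
    using insert by (simp add: divides_mult)
qed

definition shift_diff_mat :: "nat \<Rightarrow> nat \<Rightarrow> 'a::comm_ring_1 mat" where
  "shift_diff_mat n p =
     mat n n (\<lambda>(k, i). (if i = k then 1 else 0) - (if p \<le> k \<and> i = k - p then 1 else 0))"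

lemma shift_diff_mat_carrier: "shift_diff_mat n p \<in> carrier_mat n n"
  by (simp add: shift_diff_mat_def)

lemma det_shift_diff_mat:
  assumes "0 < p"
  shows "det (shift_diff_mat n p :: 'a::comm_ring_1 mat) = 1"
proof -
  have "det (shift_diff_mat n p :: 'a mat) = prod_list (diag_mat (shift_diff_mat n p :: 'a mat))"
    by (rule det_lower_triangular[OF _ shift_diff_mat_carrier]) (auto simp: shift_diff_mat_def)
  also have "diag_mat (shift_diff_mat n p :: 'a mat) = replicate n 1"
    by (rule nth_equalityI) (use assms in \<open>auto simp: diag_mat_def shift_diff_mat_def\<close>)
  finally show ?thesis by simp
qed

lemma shift_diff_mat_mult_index:
  assumes "0 < p" and A: "A \<in> carrier_mat n nc" and "k < n" and "j < nc"
  shows "(shift_diff_mat n p * A) $$ (k, j) = A $$ (k, j) - (if p \<le> k then A $$ (k - p, j) else 0)"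
proof -
  have "(shift_diff_mat n p * A) $$ (k, j) =
      (\<Sum>i<n. ((if i = k then 1 else 0) - (if p \<le> k \<and> i = k - p then 1 else 0)) * A $$ (i, j))"
    using assms by (simp add: shift_diff_mat_def scalar_prod_def lessThan_atLeast0)
  also have "\<dots> = (\<Sum>i<n. (if i = k then A $$ (i, j) else 0))
                 - (\<Sum>i<n. (if p \<le> k \<and> i = k - p then A $$ (i, j) else 0))"
    unfolding sum_subtractf[symmetric] by (rule sum.cong) (use \<open>0 < p\<close> in auto)
  also have "\<dots> = A $$ (k, j) - (if p \<le> k then A $$ (k - p, j) else 0)"
    using \<open>k < n\<close> by (auto simp: sum.delta)
  finally show ?thesis .
qed

lemma det_diagonal_scaling:
  "det (mat n n (\<lambda>(k, i). if i = k then (if p \<le> k then c else 1) else 0)) = (c::'a::comm_ring_1) ^ (n - p)"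
proof -
  let ?D = "mat n n (\<lambda>(k, i). if i = k then (if p \<le> k then c else 1) else 0)"
  have "det ?D = prod_list (diag_mat ?D)"
    by (rule det_lower_triangular[of n]) auto
  also have "diag_mat ?D = replicate (min p n) 1 @ replicate (n - p) c"
    by (rule nth_equalityI) (auto simp: diag_mat_def nth_append)
  finally show ?thesis by simp
qed

lemma det_dvd_if_rows_congruent:
  fixes A :: "'a::comm_ring_1 mat"
  assumes A: "A \<in> carrier_mat n n" and "0 < p"
    and cong: "\<And>k j. p \<le> k \<Longrightarrow> k < n \<Longrightarrow> j < n \<Longrightarrow> c dvd A $$ (k, j) - A $$ (k - p, j)"
  shows "c ^ (n - p) dvd det A"
proof -
  define E :: "'a mat" where "E = shift_diff_mat n p"
  define D :: "'a mat" where "D = mat n n (\<lambda>(k, i). if i = k then (if p \<le> k then c else 1) else 0)"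
  define M :: "'a mat" where
    "M = mat n n (\<lambda>(k, j). if p \<le> k then (SOME m. A $$ (k, j) - A $$ (k - p, j) = c * m)
                            else A $$ (k, j))"
  have E: "E \<in> carrier_mat n n" and D: "D \<in> carrier_mat n n" and M: "M \<in> carrier_mat n n"
    by (auto simp: E_def shift_diff_mat_carrier D_def M_def)
  have "E * A = D * M"
  proof (rule eq_matI)
    fix k j assume "k < dim_row (D * M)" "j < dim_col (D * M)"
    then have k: "k < n" and j: "j < n" using D M by auto
    have "(D * M) $$ (k, j) = (\<Sum>i<n. (if i = k then (if p \<le> k then c else 1) else 0) * M $$ (i, j))"
      using k j D M by (simp add: D_def scalar_prod_def lessThan_atLeast0)
    also have "\<dots> = (\<Sum>i<n. (if i = k then (if p \<le> k then c else 1) * M $$ (i, j) else 0))"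
      by (rule sum.cong) auto
    also have "\<dots> = (if p \<le> k then c else 1) * M $$ (k, j)"
      using k by (simp add: sum.delta)
    also have "\<dots> = A $$ (k, j) - (if p \<le> k then A $$ (k - p, j) else 0)"
    proof (cases "p \<le> k")
      case True
      have "A $$ (k, j) - A $$ (k - p, j) = c * (SOME m. A $$ (k, j) - A $$ (k - p, j) = c * m)"
        using cong[OF True k j] unfolding dvd_def by (rule someI_ex)
      then show ?thesis
        using True k j by (simp add: M_def)
    qed (use k j in \<open>simp add: M_def\<close>)
    finally show "(E * A) $$ (k, j) = (D * M) $$ (k, j)"
      using shift_diff_mat_mult_index[OF \<open>0 < p\<close> A k j] by (simp add: E_def)
  qed (use A D M E in auto)
  moreover have "det E = 1"
    unfolding E_def by (rule det_shift_diff_mat[OF \<open>0 < p\<close>])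
  ultimately have "det A = det D * det M"
    using det_mult[OF E A] det_mult[OF D M] by simp
  then show ?thesis
    by (simp add: D_def det_diagonal_scaling)
qed

lemma primary_pseudo_polynomial_dvd_diff:
  assumes "primary_pseudo_polynomial a" and "prime p" and "p \<le> k"
  shows "int p dvd a k - a (k - p)"
  using assms unfolding primary_pseudo_polynomial_def
  by (metis le_add_diff_inverse2 mod_eq_dvd_iff)

lemma prime_power_dvd_det_hankel:
  assumes "primary_pseudo_polynomial a" and "prime p"
  shows "int p ^ (n - p) dvd det (hankel a n)"
proof (rule det_dvd_if_rows_congruent)
  show "hankel a n \<in> carrier_mat n n"
    by (simp add: hankel_def)
  show "0 < p"
    using assms(2) prime_gt_0_nat by blast
  fix k j assume "p \<le> k" "k < n" "j < n"
  then show "int p dvd hankel a n $$ (k, j) - hankel a n $$ (k - p, j)"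
    using primary_pseudo_polynomial_dvd_diff[OF assms, of "k + j"] by (simp add: hankel_def)
qed

theorem lemma2:
  fixes a :: "nat \<Rightarrow> int" and n :: nat
  assumes "primary_pseudo_polynomial a" and "n \<ge> 1"
  shows "(\<Prod>p\<in>{p. prime p \<and> p \<le> n - 1}. int p ^ (n - p)) dvd det (hankel a n)"
proof (rule prod_dvd_if_pairwise_coprime)
  show "finite {p. prime p \<and> p \<le> n - 1}"
    by simp
  show "coprime (int p ^ (n - p)) (int q ^ (n - q))"
    if "p \<in> {p. prime p \<and> p \<le> n - 1}" "q \<in> {p. prime p \<and> p \<le> n - 1}" "p \<noteq> q" for p q
    using that by (simp add: primes_coprime)
  show "int p ^ (n - p) dvd det (hankel a n)" if "p \<in> {p. prime p \<and> p \<le> n - 1}" for p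
    using that prime_power_dvd_det_hankel[OF assms(1)] by blast
qed

end
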